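(* Let $d\ge1$, $m\in\mathbb{N}$ ($m\ge1$), and let $A_0,A_1\in\mathbb{R}^{d\times d}$ be constant matrices. Let $G:\mathbb{Z}_0^\infty\to\mathbb{R}^{d\times d}$ satisfy $A_1G(u)=G(u)A_1$ for all $u\in\mathbb{Z}_0^\infty$, and let $Z$ be the discrete function defined in the context. Then \[ X(u)=\sum_{r=1}^{u}Z(u-m-r)\,G(r-1),\qquad u\in\mathbb{Z}_{-m}^{\infty} \] (an empty sum being $\Theta$), is a solution of \[ \Delta X(u)=A_0X(u-m)+X(u-m)A_1+G(u),\ \ u\in\mathbb{Z}_0^{\infty},\qquad X(u)=\Theta,\ \ u\in\mathbb{Z}_{-m}^{0}. \]
   Context: $\Theta$ and $I$ denote the $d\times d$ zero and identity matrices; $\mathbb{Z}_a^b=\{a,a+1,\dots,b\}$ (with $\mathbb{Z}_a^\infty=\{a,a+1,\dots\}$ and $\mathbb{Z}_{-\infty}^b=\{\dots,b-1,b\}$); $\Delta X(u)=X(u+1)-X(u)$. For integers $a$ and $r\ge0$, $\binom{a}{r}=a(a-1)\cdots(a-r+1)/r!$. Define matrices $Q_{r+1}(rm)$, $r=0,1,2,\dots$, by $Q_1(0)=I$ and $Q_{r+1}(rm)=A_0Q_r((r-1)m)+Q_r((r-1)m)A_1$ for $r\ge1$. Define $Z(u)=\Theta$ for $u\in\mathbb{Z}_{-\infty}^{-m-1}$, $Z(u)=I$ for $u\in\mathbb{Z}_{-m}^{0}$, and for each integer $n\ge1$ and $u\in\mathbb{Z}_{(n-1)(m+1)+1}^{n(m+1)}$,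 \[ Z(u)=\sum_{r=0}^{n}\binom{u-(r-1)m}{r}Q_{r+1}(rm). \] *)

theory Defs
  imports "HOL-Analysis.Analysis"
begin

text \<open>Qm A0 A1 r is the matrix Q_{r+1}(r m) of the paper:
  Q_1(0) = I, Q_{r+1}(r m) = A0 Q_r((r-1)m) + Q_r((r-1)m) A1.\<close>
fun Qm :: "real^'d^'d \<Rightarrow> real^'d^'d \<Rightarrow> nat \<Rightarrow> real^'d^'d" where
  "Qm A0 A1 0 = mat 1"
| "Qm A0 A1 (Suc r) = A0 ** Qm A0 A1 r + Qm A0 A1 r ** A1"

text \<open>For u \<ge> 1 the block index n is the unique n \<ge> 1 with
  (n-1)(m+1)+1 \<le> u \<le> n(m+1), i.e. n = (u-1) div (m+1) + 1. The generalized binomial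
  coefficient a(a-1)...(a-r+1)/r! for integer a is (real a) gchoose r.\<close>
definition Zm :: "nat \<Rightarrow> real^'d^'d \<Rightarrow> real^'d^'d \<Rightarrow> int \<Rightarrow> real^'d^'d" where
  "Zm m A0 A1 u =
     (if u < - int m then 0
      else if u \<le> 0 then mat 1
      else (let n = nat ((u - 1) div (int m + 1) + 1) in
        \<Sum>r\<le>n. (of_int (u - (int r - 1) * int m) gchoose r) *\<^sub>R Qm A0 A1 r))"

end

theory Submission
  imports Defs
begin

text \<open>Since \<open>\<Delta>\<close> applied to the generalised binomial coefficient \<open>(u - (r-1)m) gchoose r\<close>
  gives \<open>(u - m - (r-2)m) gchoose (r-1)\<close> (Pascal's rule), the sum \<open>Z\<close> satisfies the
  homogeneous delay equation \<open>\<Delta>Z(v) = A\<^sub>0 Z(v-m) + Z(v-m) A\<^sub>1\<close> for \<open>v \<ge> -m\<close>, and it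
  equals \<open>I\<close> at \<open>-m\<close> and \<open>0\<close> below. Any such \<open>Z\<close> turns the convolution \<open>X\<close> into a
  solution of the inhomogeneous problem: the new summand of \<open>X(u+1)\<close> contributes
  \<open>Z(-m) G(u) = G(u)\<close>, the others contribute \<open>\<Delta>Z\<close>, and \<open>A\<^sub>1\<close> can be moved past \<open>G\<close>.\<close>

lemma matrix_add_rdistrib: "((B::real^'n^'m) + C) ** (A::real^'p^'n) = B ** A + C ** A"
  by (vector matrix_matrix_mult_def sum.distrib[symmetric] field_simps)

lemma matrix_diff_rdistrib: "((B::real^'n^'m) - C) ** (A::real^'p^'n) = B ** A - C ** A"
  by (vector matrix_matrix_mult_def sum_subtractf[symmetric] field_simps)

lemma matrix_sum_ldistrib: "(A::real^'n^'m) ** sum f S = (\<Sum>x\<in>S. A ** f x)"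
  by (induction S rule: infinite_finite_induct) (auto simp: matrix_add_ldistrib)

lemma matrix_sum_rdistrib: "sum f S ** (A::real^'p^'n) = (\<Sum>x\<in>S. f x ** A)"
  by (induction S rule: infinite_finite_induct) (auto simp: matrix_add_rdistrib)

text \<open>The truncation \<open>r(m+1) \<le> u+m\<close> is the condition
  \<open>r \<le> n\<close> of the block containing \<open>u\<close>, but unlike the block index it makes sense for every
  integer \<open>u\<close>, so that \<open>Z(u)\<close> becomes one uniform sum over \<open>Q\<^sub>r\<close>.\<close>
definition Zm_coeff :: "nat \<Rightarrow> int \<Rightarrow> nat \<Rightarrow> real" where
  "Zm_coeff m u r =
     (if int r * (int m + 1) \<le> u + int m then of_int (u - (int r - 1) * int m) gchoose r else 0)"

lemma le_zdiv_iff_mult_le: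
  fixes i j k :: int
  assumes "k > 0"
  shows "i \<le> j div k \<longleftrightarrow> i * k \<le> j"
proof
  assume "i \<le> j div k"
  then have "i * k \<le> j div k * k"
    using assms by (simp add: mult_right_mono)
  also have "\<dots> \<le> j"
    using assms by (simp add: minus_mod_eq_div_mult[symmetric])
  finally show "i * k \<le> j" .
next
  assume "i * k \<le> j"
  then show "i \<le> j div k"
    using zdiv_mono1[of "i * k" j k] assms by simp
qed

lemma le_block_index_iff:
  assumes "u > 0"
  shows "r \<le> nat ((u - 1) div (int m + 1) + 1) \<longleftrightarrow> int r * (int m + 1) \<le> u + int m"
proof -
  have "(u - 1) div (int m + 1) + 1 = (u + int m) div (int m + 1)"
    using div_add_self2[of "int m + 1" "u - 1"] by (simp add: algebra_simps)
  moreover have "0 \<le> (u + int m) div (int m + 1)"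
    using assms by (simp add: pos_imp_zdiv_nonneg_iff)
  ultimately show ?thesis
    using le_zdiv_iff_mult_le[of "int m + 1" "int r" "u + int m"] by linarith
qed

lemma Zm_eq_sum_Zm_coeff:
  assumes "nat (u + int m) \<le> K"
  shows "Zm m A0 A1 u = (\<Sum>r\<le>K. Zm_coeff m u r *\<^sub>R Qm A0 A1 r)"
proof (cases "u \<le> 0")
  case True
  have "Zm_coeff m u r = 0" if "r \<noteq> 0" for r
  proof -
    have "int m + 1 \<le> int r * (int m + 1)"
      using that by (simp add: Suc_le_eq)
    then have "\<not> int r * (int m + 1) \<le> u + int m"
      using True by linarith
    then show ?thesis by (simp add: Zm_coeff_def)
  qed
  then have "(\<Sum>r\<le>K. Zm_coeff m u r *\<^sub>R Qm A0 A1 r) = Zm_coeff m u 0 *\<^sub>R mat 1"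
    by (subst sum.mono_neutral_right[of "{..K}" "{0}"]) auto
  then show ?thesis using True by (simp add: Zm_def Zm_coeff_def)
next
  case False
  define n where "n = nat ((u - 1) div (int m + 1) + 1)"
  have in_block: "r \<le> n \<longleftrightarrow> int r * (int m + 1) \<le> u + int m" for r
    using False le_block_index_iff unfolding n_def by simp
  have "int n \<le> int n * (int m + 1)" by (simp add: distrib_left)
  then have "n \<le> K" using in_block[of n] assms by linarith
  have "Zm m A0 A1 u = (\<Sum>r\<le>n. Zm_coeff m u r *\<^sub>R Qm A0 A1 r)"
    using False by (simp add: Zm_def Zm_coeff_def in_block flip: n_def)
  also have "\<dots> = (\<Sum>r\<le>K. Zm_coeff m u r *\<^sub>R Qm A0 A1 r)"
    using \<open>n \<le> K\<close> in_block by (intro sum.mono_neutral_left) (auto simp: Zm_coeff_def)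
  finally show ?thesis .
qed

lemma Zm_coeff_Suc_diff:
  "Zm_coeff m (v + 1) (Suc r) - Zm_coeff m v (Suc r) = Zm_coeff m (v - int m) r"
proof (cases "int r * (int m + 1) \<le> v")
  case True
  define a where "a = v - int r * int m"
  have "Zm_coeff m v (Suc r) = of_int a gchoose Suc r"
  proof (cases "int r * (int m + 1) = v")
    case True
    then have "Zm_coeff m v (Suc r) = 0"
      by (simp add: Zm_coeff_def algebra_simps)
    moreover have "a = int r"
      using True by (simp add: a_def algebra_simps)
    then have "of_int a gchoose Suc r = (0::real)"
      using binomial_gbinomial[of r "Suc r", where 'a=real] by (simp add: binomial_eq_0)
    ultimately show ?thesis by simp
  qed (use True in \<open>simp add: Zm_coeff_def a_def algebra_simps\<close>)
  moreover have "Zm_coeff m (v + 1) (Suc r) = (of_int a + 1) gchoose Suc r"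
    using True by (simp add: Zm_coeff_def a_def algebra_simps)
  moreover have "Zm_coeff m (v - int m) r = of_int a gchoose r"
    using True by (simp add: Zm_coeff_def a_def algebra_simps)
  ultimately show ?thesis by (simp add: gbinomial_Suc_Suc)
next
  case False
  then show ?thesis by (simp add: Zm_coeff_def algebra_simps)
qed

lemma Zm_difference:
  assumes "v \<ge> - int m"
  shows "Zm m A0 A1 (v + 1) - Zm m A0 A1 v
           = A0 ** Zm m A0 A1 (v - int m) + Zm m A0 A1 (v - int m) ** A1"
proof -
  define K where "K = nat (v + 1 + int m)"
  let ?Q = "Qm A0 A1" and ?c = "Zm_coeff m"
  have "Zm m A0 A1 (v + 1) = (\<Sum>r\<le>Suc K. ?c (v + 1) r *\<^sub>R ?Q r)"
    and "Zm m A0 A1 v = (\<Sum>r\<le>Suc K. ?c v r *\<^sub>R ?Q r)"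
    and Zm_shifted: "Zm m A0 A1 (v - int m) = (\<Sum>r\<le>K. ?c (v - int m) r *\<^sub>R ?Q r)"
    by (rule Zm_eq_sum_Zm_coeff; simp add: K_def)+
  then have "Zm m A0 A1 (v + 1) - Zm m A0 A1 v = (\<Sum>r\<le>Suc K. (?c (v + 1) r - ?c v r) *\<^sub>R ?Q r)"
    by (simp add: sum_subtractf[symmetric] scaleR_left_diff_distrib)
  also have "\<dots> = (?c (v + 1) 0 - ?c v 0) *\<^sub>R ?Q 0
                  + (\<Sum>r\<le>K. (?c (v + 1) (Suc r) - ?c v (Suc r)) *\<^sub>R ?Q (Suc r))"
    by (rule sum.atMost_Suc_shift)
  also have "?c (v + 1) 0 - ?c v 0 = 0"
    using assms by (simp add: Zm_coeff_def)
  also have "(\<Sum>r\<le>K. (?c (v + 1) (Suc r) - ?c v (Suc r)) *\<^sub>R ?Q (Suc r))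
             = (\<Sum>r\<le>K. ?c (v - int m) r *\<^sub>R (A0 ** ?Q r + ?Q r ** A1))"
    by (simp only: Zm_coeff_Suc_diff Qm.simps)
  also have "\<dots> = A0 ** Zm m A0 A1 (v - int m) + Zm m A0 A1 (v - int m) ** A1"
    unfolding Zm_shifted
    by (simp add: matrix_sum_ldistrib matrix_sum_rdistrib matrix_scalar_ac scalar_matrix_assoc
        scaleR_add_right sum.distrib)
  finally show ?thesis by simp
qed

lemma convolution_solves_delay_equation:
  fixes Z X :: "int \<Rightarrow> real^'d^'d" and G :: "nat \<Rightarrow> real^'d^'d"
  assumes Z_below: "\<And>v. v < - int m \<Longrightarrow> Z v = 0"
    and Z_start: "Z (- int m) = mat 1"
    and Z_diff: "\<And>v. v \<ge> - int m \<Longrightarrow>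
           Z (v + 1) - Z v = A0 ** Z (v - int m) + Z (v - int m) ** A1"
    and G_commute: "\<And>u. A1 ** G u = G u ** A1"
    and X_eq: "\<And>u. u \<ge> - int m \<Longrightarrow>
           X u = (\<Sum>r\<in>{1..u}. Z (u - int m - r) ** G (nat (r - 1)))"
    and "u \<ge> 0"
  shows "X (u + 1) - X u = A0 ** X (u - int m) + X (u - int m) ** A1 + G (nat u)"
proof -
  let ?g = "\<lambda>r. G (nat (r - 1))"
  have X_extend: "X w = (\<Sum>r\<in>{1..u}. Z (w - int m - r) ** ?g r)" if "- int m \<le> w" "w \<le> u" for w
  proof -
    have "X w = (\<Sum>r\<in>{1..w}. Z (w - int m - r) ** ?g r)"
      using that(1) by (rule X_eq)
    also have "\<dots> = (\<Sum>r\<in>{1..u}. Z (w - int m - r) ** ?g r)"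
      using that by (intro sum.mono_neutral_left) (auto simp: Z_below)
    finally show ?thesis .
  qed
  have "{1..u + 1} = insert (u + 1) {1..u}"
    using \<open>u \<ge> 0\<close> by auto
  then have "X (u + 1) = G (nat u) + (\<Sum>r\<in>{1..u}. Z (u - int m - r + 1) ** ?g r)"
    using X_eq[of "u + 1"] \<open>u \<ge> 0\<close> Z_start by (simp add: algebra_simps)
  then have "X (u + 1) - X u
             = G (nat u) + (\<Sum>r\<in>{1..u}. (Z (u - int m - r + 1) - Z (u - int m - r)) ** ?g r)"
    using X_extend[of u] \<open>u \<ge> 0\<close> by (simp add: sum_subtractf matrix_diff_rdistrib)
  also have "(\<Sum>r\<in>{1..u}. (Z (u - int m - r + 1) - Z (u - int m - r)) ** ?g r)
             = (\<Sum>r\<in>{1..u}. A0 ** (Z (u - int m - int m - r) ** ?g r)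
                              + (Z (u - int m - int m - r) ** ?g r) ** A1)"
  proof (rule sum.cong)
    fix r assume "r \<in> {1..u}"
    then have "Z (u - int m - r + 1) - Z (u - int m - r)
               = A0 ** Z (u - int m - int m - r) + Z (u - int m - int m - r) ** A1"
      using Z_diff[of "u - int m - r"] by (simp add: algebra_simps)
    moreover have "Z (u - int m - int m - r) ** A1 ** ?g r = Z (u - int m - int m - r) ** ?g r ** A1"
      by (metis G_commute matrix_mul_assoc)
    ultimately show "(Z (u - int m - r + 1) - Z (u - int m - r)) ** ?g r
                     = A0 ** (Z (u - int m - int m - r) ** ?g r)
                       + (Z (u - int m - int m - r) ** ?g r) ** A1"
      by (simp add: matrix_add_rdistrib matrix_mul_assoc)
  qed simp
  also have "\<dots> = A0 ** X (u - int m) + X (u - int m) ** A1"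
    using X_extend[of "u - int m"] \<open>u \<ge> 0\<close>
    by (simp add: sum.distrib matrix_sum_ldistrib matrix_sum_rdistrib)
  finally show ?thesis by (simp add: add.commute)
qed

theorem theorem8:
  fixes m :: nat and A0 A1 :: "real^'d^'d" and G :: "nat \<Rightarrow> real^'d^'d"
    and X :: "int \<Rightarrow> real^'d^'d"
  assumes "m \<ge> 1"
    and "\<And>u. A1 ** G u = G u ** A1"
    and "\<And>u. u \<ge> - int m \<Longrightarrow>
           X u = (\<Sum>r\<in>{1..u}. Zm m A0 A1 (u - int m - r) ** G (nat (r - 1)))"
  shows "(\<forall>u\<ge>0. X (u + 1) - X u = A0 ** X (u - int m) + X (u - int m) ** A1 + G (nat u))
         \<and> (\<forall>u. - int m \<le> u \<and> u \<le> 0 \<longrightarrow> X u = 0)"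
proof (intro conjI allI impI)
  fix u :: int
  assume "u \<ge> 0"
  have "Zm m A0 A1 v = 0" if "v < - int m" for v
    using that by (simp add: Zm_def)
  moreover have "Zm m A0 A1 (- int m) = mat 1"
    by (simp add: Zm_def)
  ultimately show "X (u + 1) - X u = A0 ** X (u - int m) + X (u - int m) ** A1 + G (nat u)"
    using convolution_solves_delay_equation Zm_difference assms(2,3) \<open>u \<ge> 0\<close> by blast
next
  fix u :: int
  assume "- int m \<le> u \<and> u \<le> 0"
  then show "X u = 0"
    using assms(3)[of u] by simp
qed

end
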